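(* Let ${\cal H}$ be a $1$-Sperner hypergraph and let $C$ be a hyperedge of ${\cal H}$ of maximum possible size. Then for every two distinct vertices $x,y\notin C$ and every two hyperedges $A$ containing $x$ and $B$ containing $y$, $|A|\le|B|$ implies $A\cap C\subseteq B\cap C$.
   Context: A hypergraph ${\cal H}=(V,{\cal E})$ consists of a finite vertex set $V$ and a set ${\cal E}$ of subsets of $V$. It is $1$-Sperner if every two distinct hyperedges $e,f$ satisfy $\min\{|e\setminus f|,|f\setminus e|\}=1$. *)

theory Defs
  imports Main
begin

definition hypergraph :: "'a set \<Rightarrow> 'a set set \<Rightarrow> bool" where
  "hypergraph V E \<longleftrightarrow> finite V \<and> (\<forall>e\<in>E. e \<subseteq> V)"

definition one_sperner :: "'a set set \<Rightarrow> bool" where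
  "one_sperner E \<longleftrightarrow>
     (\<forall>e\<in>E. \<forall>f\<in>E. e \<noteq> f \<longrightarrow> min (card (e - f)) (card (f - e)) = 1)"

end

theory Submission
  imports Defs
begin

text \<open>In a 1-Sperner family, an edge e no larger than an edge f satisfies
  |e - f| \<le> |f - e|, so e - f is a single vertex. Against the maximum edge C this gives
  B - C = {y}, hence x \<notin> B; against B it then gives A - B = {x}, so every vertex of
  A \<inter> C lies in B.\<close>

lemma one_sperner_card_diff_eq_1:
  assumes "one_sperner E" "e \<in> E" "f \<in> E" "e \<noteq> f"
    and "finite e" "finite f" "card e \<le> card f"
  shows "card (e - f) = 1"
proof -
  have "card (e - f) = card e - card (e \<inter> f)"
    by (simp add: card_Diff_subset_Int \<open>finite e\<close>)
  moreover have "card (f - e) = card f - card (e \<inter> f)"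
    by (metis Int_commute card_Diff_subset_Int \<open>finite f\<close> finite_Int)
  moreover have "card (e \<inter> f) \<le> card e"
    by (simp add: card_mono \<open>finite e\<close>)
  ultimately have "card (e - f) \<le> card (f - e)"
    using \<open>card e \<le> card f\<close> by linarith
  moreover have "min (card (e - f)) (card (f - e)) = 1"
    using assms(1-4) unfolding one_sperner_def by blast
  ultimately show ?thesis by linarith
qed

lemma one_sperner_diff_eq_singleton:
  assumes "one_sperner E" "e \<in> E" "f \<in> E"
    and "finite e" "finite f" "card e \<le> card f"
    and "x \<in> e" "x \<notin> f"
  shows "e - f = {x}"
proof -
  have "e \<noteq> f"
    using \<open>x \<in> e\<close> \<open>x \<notin> f\<close> by blast
  then have "card (e - f) = 1"
    using one_sperner_card_diff_eq_1 assms(1-6) by blast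
  then obtain z where "e - f = {z}"
    by (meson card_1_singletonE)
  then show ?thesis
    using \<open>x \<in> e\<close> \<open>x \<notin> f\<close> by auto
qed

theorem lemma5:
  fixes V :: "'a set" and E :: "'a set set"
  assumes "hypergraph V E"
    and "one_sperner E"
    and "C \<in> E"
    and "\<forall>e\<in>E. card e \<le> card C"
    and "x \<in> V" and "y \<in> V" and "x \<noteq> y" and "x \<notin> C" and "y \<notin> C"
    and "A \<in> E" and "x \<in> A" and "B \<in> E" and "y \<in> B"
    and "card A \<le> card B"
  shows "A \<inter> C \<subseteq> B \<inter> C"
proof -
  have finite_edges: "finite e" if "e \<in> E" for e
    using assms(1) that unfolding hypergraph_def by (meson finite_subset)
  have "B - C = {y}"
    using one_sperner_diff_eq_singleton[OF assms(2,12,3)] finite_edges assms(3,4,9,12,13)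
    by blast
  then have "x \<notin> B"
    using \<open>x \<noteq> y\<close> \<open>x \<notin> C\<close> by blast
  then have "A - B = {x}"
    using one_sperner_diff_eq_singleton[OF assms(2,10,12)] finite_edges assms(10-12,14)
    by blast
  then show ?thesis
    using \<open>x \<notin> C\<close> by auto
qed

end
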